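(* Let $\mu$ be a valuation on $\mathrm{Spec}(R)$ and $f\in R$, $f\ge0$. If $r<r'<s'<s$ are rationals and $p<q$ are rationals, then $p<\Delta(r,s)$ or $\Delta[r',s']<q$.
   Context: $R$ is a Riesz space over $\mathbb{Q}$ with strong unit $1$; rationals identified with multiples of $1$. $\mathrm{Spec}(R)$ is the distributive lattice generated by $D(a)$, $a\in R$, subject to $D(1)=1$; $D(a)\wedge D(-a)=0$; $D(a+b)\le D(a)\vee D(b)$; $D(a)=0$ if $a\le0$; $D(a\vee b)=D(a)\vee D(b)$. A valuation is a map $\mu$ from $\mathrm{Spec}(R)$ to nonnegative lower reals (inhabited, downward closed, rounded sets of rationals; $p<x$ means $p\in x$) with $\mu(0)=0$, $\mu(1)=1$, $\mu(x)+\mu(y)=\mu(x\vee y)+\mu(x\wedge y)$, monotone, and $\mu(D(a))\le\bigvee_{\varepsilon>0}\mu(D(a-\varepsilon))$. $\Delta(r,s):=\mu(D(f-r)\wedge D(s-f))$ (lower real) and $\Delta[r,s]$ is the upper real $1-\mu(D(r-f))-\mu(D(f-s))$. *)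

theory Defs
  imports Main "HOL-Library.Lattice_Algebras"
begin

text \<open>R is a type with a lattice-ordered abelian group structure, a scalar
multiplication by rationals making it a Q-vector space whose order is compatible
with multiplication by nonnegative rationals, and a strong unit u (the element 1
of the paper).\<close>

definition riesz_space_unit :: "(rat \<Rightarrow> 'a::lattice_ab_group_add \<Rightarrow> 'a) \<Rightarrow> 'a \<Rightarrow> bool" where
  "riesz_space_unit scale u \<longleftrightarrow>
     vector_space scale \<and>
     (\<forall>q a b. 0 \<le> q \<longrightarrow> a \<le> b \<longrightarrow> scale q a \<le> scale q b) \<and>
     0 \<le> u \<and>
     (\<forall>a. \<exists>n::nat. sup a (- a) \<le> scale (of_nat n) u)"

text \<open>The rational q, identified with q times the unit.\<close>
definition ratR :: "(rat \<Rightarrow> 'a \<Rightarrow> 'a) \<Rightarrow> 'a \<Rightarrow> rat \<Rightarrow> 'a" where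
  "ratR scale u q = scale q u"

datatype 'a latterm = Gen 'a | Bot | Top | Join "'a latterm" "'a latterm" | Meet "'a latterm" "'a latterm"

text \<open>The congruence on lattice terms generated by the bounded distributive lattice
laws and the defining relations of Spec(R); Spec(R) is the quotient of
the term algebra by this congruence.\<close>

inductive spec_eq :: "'a::lattice_ab_group_add \<Rightarrow> 'a latterm \<Rightarrow> 'a latterm \<Rightarrow> bool"
  for u :: "'a" where
  refl: "spec_eq u x x"
| sym: "spec_eq u x y \<Longrightarrow> spec_eq u y x"
| trans: "spec_eq u x y \<Longrightarrow> spec_eq u y z \<Longrightarrow> spec_eq u x z"
| cong_join: "spec_eq u x x' \<Longrightarrow> spec_eq u y y' \<Longrightarrow> spec_eq u (Join x y) (Join x' y')"
| cong_meet: "spec_eq u x x' \<Longrightarrow> spec_eq u y y' \<Longrightarrow> spec_eq u (Meet x y) (Meet x' y')"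
| join_assoc: "spec_eq u (Join (Join x y) z) (Join x (Join y z))"
| meet_assoc: "spec_eq u (Meet (Meet x y) z) (Meet x (Meet y z))"
| join_comm: "spec_eq u (Join x y) (Join y x)"
| meet_comm: "spec_eq u (Meet x y) (Meet y x)"
| absorb1: "spec_eq u (Join x (Meet x y)) x"
| absorb2: "spec_eq u (Meet x (Join x y)) x"
| distrib: "spec_eq u (Meet x (Join y z)) (Join (Meet x y) (Meet x z))"
| join_bot: "spec_eq u (Join x Bot) x"
| meet_top: "spec_eq u (Meet x Top) x"
| D_one: "spec_eq u (Gen u) Top"
| D_neg: "spec_eq u (Meet (Gen a) (Gen (- a))) Bot"
| D_add: "spec_eq u (Meet (Gen (a + b)) (Join (Gen a) (Gen b))) (Gen (a + b))"
| D_nonpos: "a \<le> 0 \<Longrightarrow> spec_eq u (Gen a) Bot"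
| D_sup: "spec_eq u (Gen (sup a b)) (Join (Gen a) (Gen b))"

definition spec_le :: "'a::lattice_ab_group_add \<Rightarrow> 'a latterm \<Rightarrow> 'a latterm \<Rightarrow> bool" where
  "spec_le u x y \<longleftrightarrow> spec_eq u (Meet x y) x"

text \<open>A lower real x is represented by the set of rationals p with p < x.\<close>
definition lower_real :: "rat set \<Rightarrow> bool" where
  "lower_real x \<longleftrightarrow> (\<exists>p. p \<in> x) \<and> (\<forall>p q. q \<in> x \<longrightarrow> p \<le> q \<longrightarrow> p \<in> x)
                     \<and> (\<forall>p\<in>x. \<exists>q\<in>x. p < q)"

definition nonneg_lower_real :: "rat set \<Rightarrow> bool" where
  "nonneg_lower_real x \<longleftrightarrow> lower_real x \<and> (\<forall>p::rat. p < 0 \<longrightarrow> p \<in> x)"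

definition lr_const :: "rat \<Rightarrow> rat set" where
  "lr_const c = {p. p < c}"

definition lr_add :: "rat set \<Rightarrow> rat set \<Rightarrow> rat set" where
  "lr_add x y = {p + q | p q. p \<in> x \<and> q \<in> y}"

text \<open>The upper real 1 - x - y for lower reals x, y, represented by the set of
rationals q with 1 - x - y < q.\<close>
definition ur_one_minus :: "rat set \<Rightarrow> rat set \<Rightarrow> rat set" where
  "ur_one_minus x y = {q. \<exists>a\<in>x. \<exists>b\<in>y. 1 - a - b < q}"

definition valuation ::
  "(rat \<Rightarrow> 'a::lattice_ab_group_add \<Rightarrow> 'a) \<Rightarrow> 'a \<Rightarrow> ('a latterm \<Rightarrow> rat set) \<Rightarrow> bool" where
  "valuation scale u \<mu> \<longleftrightarrow>
     (\<forall>x y. spec_eq u x y \<longrightarrow> \<mu> x = \<mu> y) \<and>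
     (\<forall>x. nonneg_lower_real (\<mu> x)) \<and>
     \<mu> Bot = lr_const 0 \<and>
     \<mu> Top = lr_const 1 \<and>
     (\<forall>x y. lr_add (\<mu> x) (\<mu> y) = lr_add (\<mu> (Join x y)) (\<mu> (Meet x y))) \<and>
     (\<forall>x y. spec_le u x y \<longrightarrow> \<mu> x \<subseteq> \<mu> y) \<and>
     (\<forall>a. \<mu> (Gen a) \<subseteq> (\<Union>\<epsilon>\<in>{\<epsilon>::rat. 0 < \<epsilon>}. \<mu> (Gen (a - ratR scale u \<epsilon>))))"

definition Delta_open :: "(rat \<Rightarrow> 'a::lattice_ab_group_add \<Rightarrow> 'a) \<Rightarrow> 'a \<Rightarrow> ('a latterm \<Rightarrow> rat set) \<Rightarrow> 'a \<Rightarrow> rat \<Rightarrow> rat \<Rightarrow> rat set" where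
  "Delta_open scale u \<mu> f r s = \<mu> (Meet (Gen (f - ratR scale u r)) (Gen (ratR scale u s - f)))"

definition Delta_closed :: "(rat \<Rightarrow> 'a::lattice_ab_group_add \<Rightarrow> 'a) \<Rightarrow> 'a \<Rightarrow> ('a latterm \<Rightarrow> rat set) \<Rightarrow> 'a \<Rightarrow> rat \<Rightarrow> rat \<Rightarrow> rat set" where
  "Delta_closed scale u \<mu> f r s =
     ur_one_minus (\<mu> (Gen (ratR scale u r - f))) (\<mu> (Gen (f - ratR scale u s)))"

end

theory Submission
  imports Defs
begin

text \<open>
  Write P = D(f-r), N = D(s-f), A = D(r'-f), B = D(f-s').
  Since r < r', the element (f-r) + (r'-f) is a positive rational multiple of
  the unit, so D of it is 1 (Archimedean property of the strong unit), and the
  relation D(a+b) <= D(a) v D(b) gives 1 = P v A; likewise 1 = N v B.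
  Distributivity then yields 1 = (P v A) ^ (N v B) <= (A v B) v (P ^ N).
  Applying the valuation: 1 <= mu(A) + mu(B) + mu(P ^ N) by subadditivity,
  and splitting 1 + p - q accordingly shows that either p < mu(P ^ N) =
  Delta(r,s), or 1 - mu(A) - mu(B) < q, i.e. Delta[r',s'] < q.
\<close>

lemmas [trans] = spec_eq.trans

lemma spec_meet_idem: "spec_eq u (Meet x x) x"
proof -
  have "spec_eq u (Meet x x) (Meet x (Join x (Meet x x)))"
    by (rule spec_eq.sym[OF spec_eq.cong_meet[OF spec_eq.refl spec_eq.absorb1]])
  also have "spec_eq u \<dots> x" by (rule spec_eq.absorb2)
  finally show ?thesis .
qed

lemma spec_le_refl: "spec_le u x x"
  unfolding spec_le_def by (rule spec_meet_idem)

lemma spec_le_trans: "spec_le u x y \<Longrightarrow> spec_le u y z \<Longrightarrow> spec_le u x z"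
  unfolding spec_le_def
proof -
  assume xy: "spec_eq u (Meet x y) x" and yz: "spec_eq u (Meet y z) y"
  have "spec_eq u (Meet x z) (Meet (Meet x y) z)"
    by (rule spec_eq.cong_meet[OF spec_eq.sym[OF xy] spec_eq.refl])
  also have "spec_eq u \<dots> (Meet x (Meet y z))" by (rule spec_eq.meet_assoc)
  also have "spec_eq u \<dots> (Meet x y)" by (rule spec_eq.cong_meet[OF spec_eq.refl yz])
  also have "spec_eq u \<dots> x" by (rule xy)
  finally show "spec_eq u (Meet x z) x" .
qed

lemma spec_le_eq_right: "spec_le u x y \<Longrightarrow> spec_eq u y y' \<Longrightarrow> spec_le u x y'"
  unfolding spec_le_def
  by (rule spec_eq.trans[OF spec_eq.cong_meet[OF spec_eq.refl spec_eq.sym]])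

lemma spec_le_eq_left: "spec_eq u x' x \<Longrightarrow> spec_le u x y \<Longrightarrow> spec_le u x' y"
  unfolding spec_le_def
proof -
  assume x'x: "spec_eq u x' x" and xy: "spec_eq u (Meet x y) x"
  have "spec_eq u (Meet x' y) (Meet x y)" by (rule spec_eq.cong_meet[OF x'x spec_eq.refl])
  also have "spec_eq u \<dots> x" by (rule xy)
  also have "spec_eq u \<dots> x'" by (rule spec_eq.sym[OF x'x])
  finally show "spec_eq u (Meet x' y) x'" .
qed

lemma spec_meet_le1: "spec_le u (Meet x y) x"
  unfolding spec_le_def
proof -
  have "spec_eq u (Meet (Meet x y) x) (Meet x (Meet y x))" by (rule spec_eq.meet_assoc)
  also have "spec_eq u \<dots> (Meet x (Meet x y))"
    by (rule spec_eq.cong_meet[OF spec_eq.refl spec_eq.meet_comm])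
  also have "spec_eq u \<dots> (Meet (Meet x x) y)" by (rule spec_eq.sym[OF spec_eq.meet_assoc])
  also have "spec_eq u \<dots> (Meet x y)" by (rule spec_eq.cong_meet[OF spec_meet_idem spec_eq.refl])
  finally show "spec_eq u (Meet (Meet x y) x) (Meet x y)" .
qed

lemma spec_meet_le2: "spec_le u (Meet x y) y"
  by (rule spec_le_eq_left[OF spec_eq.meet_comm spec_meet_le1])

lemma spec_meet_glb: "spec_le u z x \<Longrightarrow> spec_le u z y \<Longrightarrow> spec_le u z (Meet x y)"
  unfolding spec_le_def
proof -
  assume zx: "spec_eq u (Meet z x) z" and zy: "spec_eq u (Meet z y) z"
  have "spec_eq u (Meet z (Meet x y)) (Meet (Meet z x) y)"
    by (rule spec_eq.sym[OF spec_eq.meet_assoc])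
  also have "spec_eq u \<dots> (Meet z y)" by (rule spec_eq.cong_meet[OF zx spec_eq.refl])
  also have "spec_eq u \<dots> z" by (rule zy)
  finally show "spec_eq u (Meet z (Meet x y)) z" .
qed

lemma spec_join_ge1: "spec_le u x (Join x y)"
  unfolding spec_le_def by (rule spec_eq.absorb2)

lemma spec_join_ge2: "spec_le u y (Join x y)"
  by (rule spec_le_eq_right[OF spec_join_ge1 spec_eq.join_comm])

lemma spec_join_lub: "spec_le u x z \<Longrightarrow> spec_le u y z \<Longrightarrow> spec_le u (Join x y) z"
  unfolding spec_le_def
proof -
  assume xz: "spec_eq u (Meet x z) x" and yz: "spec_eq u (Meet y z) y"
  have "spec_eq u (Meet (Join x y) z) (Meet z (Join x y))" by (rule spec_eq.meet_comm)
  also have "spec_eq u \<dots> (Join (Meet z x) (Meet z y))" by (rule spec_eq.distrib)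
  also have "spec_eq u \<dots> (Join x y)"
    by (rule spec_eq.cong_join[OF spec_eq.trans[OF spec_eq.meet_comm xz]
                                  spec_eq.trans[OF spec_eq.meet_comm yz]])
  finally show "spec_eq u (Meet (Join x y) z) (Join x y)" .
qed

lemma spec_top_cover:
  assumes PA: "spec_le u Top (Join P A)" and NB: "spec_le u Top (Join N B)"
  shows "spec_le u Top (Join (Join A B) (Meet P N))"
proof -
  let ?W = "Join (Join A B) (Meet P N)"
  have A_W: "spec_le u A ?W" by (rule spec_le_trans[OF spec_join_ge1 spec_join_ge1])
  have B_W: "spec_le u B ?W" by (rule spec_le_trans[OF spec_join_ge2 spec_join_ge1])
  have NP_W: "spec_le u (Meet N P) ?W"
    by (rule spec_le_trans[OF spec_meet_glb[OF spec_meet_le2 spec_meet_le1] spec_join_ge2])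
  have PAN_W: "spec_le u (Meet (Join P A) N) ?W"
  proof -
    have "spec_eq u (Meet (Join P A) N) (Join (Meet N P) (Meet N A))"
      by (rule spec_eq.trans[OF spec_eq.meet_comm spec_eq.distrib])
    moreover have "spec_le u (Join (Meet N P) (Meet N A)) ?W"
      by (rule spec_join_lub[OF NP_W spec_le_trans[OF spec_meet_le2 A_W]])
    ultimately show ?thesis by (rule spec_le_eq_left)
  qed
  have "spec_le u (Meet (Join P A) (Join N B)) ?W"
    by (rule spec_le_eq_left[OF spec_eq.distrib
          spec_join_lub[OF PAN_W spec_le_trans[OF spec_meet_le2 B_W]]])
  then show ?thesis by (rule spec_le_trans[OF spec_meet_glb[OF PA NB]])
qed

lemma spec_gen_mono:
  assumes "a \<le> b"
  shows "spec_le u (Gen a) (Gen b)"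
proof -
  have "spec_eq u (Join (Gen a) (Gen b)) (Gen (sup a b))" by (rule spec_eq.sym[OF spec_eq.D_sup])
  then have "spec_eq u (Join (Gen a) (Gen b)) (Gen b)" using assms by (simp add: sup_absorb2)
  then show ?thesis by (rule spec_le_eq_right[OF spec_join_ge1])
qed

lemma spec_gen_add: "spec_le u (Gen (a + b)) (Join (Gen a) (Gen b))"
  by (rule spec_le_eq_left[OF spec_eq.sym[OF spec_eq.D_add] spec_meet_le2])

lemma riesz_module: "riesz_space_unit scale u \<Longrightarrow> module scale"
  unfolding riesz_space_unit_def module_iff_vector_space by simp

text \<open>By subadditivity of D, D(n d) <= D(d) for every positive integer n.\<close>

lemma spec_gen_multiple_le:
  assumes "module scale"
  shows "spec_le u (Gen (scale (of_nat (Suc k) * d) u)) (Gen (scale d u))"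
proof (induction k)
  case 0
  show ?case by (simp add: spec_le_refl)
next
  case (Suc k)
  have "scale (of_nat (Suc (Suc k)) * d) u = scale (of_nat (Suc k) * d) u + scale d u"
    using module.scale_left_distrib[OF assms, of "of_nat (Suc k) * d" d u]
    by (simp add: algebra_simps)
  then have "spec_le u (Gen (scale (of_nat (Suc (Suc k)) * d) u))
                       (Join (Gen (scale (of_nat (Suc k) * d) u)) (Gen (scale d u)))"
    by (simp only: spec_gen_add)
  then show ?case by (rule spec_le_trans[OF _ spec_join_lub[OF Suc spec_le_refl]])
qed

text \<open>
  D(d) = 1 for every rational d > 0: some multiple n d exceeds 1, so
  1 = D(1) <= D(n d) <= D(d).
\<close>

lemma spec_gen_pos_rat:
  assumes rs: "riesz_space_unit scale u" and d: "(0::rat) < d"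
  shows "spec_le u Top (Gen (scale d u))"
proof -
  have vs: "module scale" using rs by (rule riesz_module)
  have mono: "\<And>q a b. 0 \<le> q \<Longrightarrow> a \<le> b \<Longrightarrow> scale q a \<le> scale q b"
    and u0: "0 \<le> u" using rs unfolding riesz_space_unit_def by auto
  obtain n where n: "1 < of_nat n * d" using ex_less_of_nat_mult[OF d] by blast
  then obtain k where k: "n = Suc k" by (cases n) auto
  have "scale (of_nat n * d) u = u + scale (of_nat n * d - 1) u"
    using module.scale_left_diff_distrib[OF vs, of "of_nat n * d" 1 u] module.scale_one[OF vs, of u]
    by simp
  moreover have "0 \<le> scale (of_nat n * d - 1) u"
    using mono[of "of_nat n * d - 1" 0 u] u0 n module.scale_zero_right[OF vs] by simp
  ultimately have "u \<le> scale (of_nat n * d) u" by simp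
  then have "spec_le u (Gen u) (Gen (scale d u))"
    using spec_le_trans[OF spec_gen_mono spec_gen_multiple_le[OF vs]] k by blast
  then show ?thesis by (rule spec_le_eq_left[OF spec_eq.sym[OF spec_eq.D_one]])
qed

lemma spec_top_split:
  assumes rs: "riesz_space_unit scale u" and xy: "(x::rat) < y"
  shows "spec_le u Top (Join (Gen (f - ratR scale u x)) (Gen (ratR scale u y - f)))"
proof -
  have "(f - ratR scale u x) + (ratR scale u y - f) = scale (y - x) u"
    unfolding ratR_def using module.scale_left_diff_distrib[OF riesz_module[OF rs], of y x u]
    by simp
  then have "spec_le u (Gen (scale (y - x) u))
                       (Join (Gen (f - ratR scale u x)) (Gen (ratR scale u y - f)))"
    by (metis spec_gen_add)
  moreover have "spec_le u Top (Gen (scale (y - x) u))"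
    using spec_gen_pos_rat[OF rs] xy by simp
  ultimately show ?thesis by (rule spec_le_trans[rotated])
qed

text \<open>A valuation is subadditive: mu(X v Y) <= mu(X) + mu(Y), since mu(X ^ Y) >= 0.\<close>

lemma valuation_subadd:
  assumes v: "valuation scale u \<mu>"
  shows "\<mu> (Join X Y) \<subseteq> lr_add (\<mu> X) (\<mu> Y)"
proof
  fix t assume t: "t \<in> \<mu> (Join X Y)"
  have nn: "\<And>x. nonneg_lower_real (\<mu> x)" using v unfolding valuation_def by blast
  obtain t' where t': "t' \<in> \<mu> (Join X Y)" "t < t'"
    using nn[of "Join X Y"] t unfolding nonneg_lower_real_def lower_real_def by blast
  have "t - t' \<in> \<mu> (Meet X Y)" using nn[of "Meet X Y"] t'(2) unfolding nonneg_lower_real_def by auto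
  then have "t' + (t - t') \<in> lr_add (\<mu> (Join X Y)) (\<mu> (Meet X Y))"
    unfolding lr_add_def using t'(1) by blast
  moreover have "lr_add (\<mu> X) (\<mu> Y) = lr_add (\<mu> (Join X Y)) (\<mu> (Meet X Y))"
    using v unfolding valuation_def by blast
  ultimately show "t \<in> lr_add (\<mu> X) (\<mu> Y)" by simp
qed

text \<open>
  If 1 = (A v B) v C, then for rationals p < q either p < mu(C) or
  1 - mu(A) - mu(B) < q: split 1 + p - q < mu((A v B) v C) as a + b + c
  with a < mu(A), b < mu(B), c < mu(C); if p is not below mu(C), then c < p,
  whence 1 - a - b < q.
\<close>

lemma valuation_cover_estimate:
  assumes v: "valuation scale u \<mu>"
    and cover: "spec_le u Top (Join (Join A B) C)"
    and pq: "p < q"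
  shows "p \<in> \<mu> C \<or> q \<in> ur_one_minus (\<mu> A) (\<mu> B)"
proof (cases "p \<in> \<mu> C")
  case False
  have "\<mu> Top \<subseteq> \<mu> (Join (Join A B) C)" and "\<mu> Top = lr_const 1"
    using v cover unfolding valuation_def by blast+
  then have "1 + p - q \<in> \<mu> (Join (Join A B) C)" unfolding lr_const_def using pq by auto
  then obtain a b c where a: "a \<in> \<mu> A" and b: "b \<in> \<mu> B" and c: "c \<in> \<mu> C"
    and sum: "1 + p - q = a + b + c"
    using valuation_subadd[OF v] unfolding lr_add_def by blast
  have "lower_real (\<mu> C)" using v unfolding valuation_def nonneg_lower_real_def by blast
  then have "c < p" using c False unfolding lower_real_def by (meson not_less)
  then have "1 - a - b < q" using sum by simp
  then show ?thesis unfolding ur_one_minus_def using a b by blast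
qed simp

theorem lemma4p11:
  fixes scale :: "rat \<Rightarrow> 'a::lattice_ab_group_add \<Rightarrow> 'a"
    and u f :: 'a
    and \<mu> :: "'a latterm \<Rightarrow> rat set"
    and r r' s' s p q :: rat
  assumes "riesz_space_unit scale u"
    and "valuation scale u \<mu>"
    and "0 \<le> f"
    and "r < r'" and "r' < s'" and "s' < s"
    and "p < q"
  shows "p \<in> Delta_open scale u \<mu> f r s \<or> q \<in> Delta_closed scale u \<mu> f r' s'"
proof -
  define P where "P = Gen (f - ratR scale u r)"
  define N where "N = Gen (ratR scale u s - f)"
  define A where "A = Gen (ratR scale u r' - f)"
  define B where "B = Gen (f - ratR scale u s')"
  have "spec_le u Top (Join P A)"
    unfolding P_def A_def by (rule spec_top_split[OF assms(1) assms(4)])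
  moreover have "spec_le u Top (Join N B)"
    using spec_le_eq_right[OF spec_top_split[OF assms(1) assms(6)] spec_eq.join_comm]
    unfolding N_def B_def .
  ultimately have "spec_le u Top (Join (Join A B) (Meet P N))" by (rule spec_top_cover)
  then have "p \<in> \<mu> (Meet P N) \<or> q \<in> ur_one_minus (\<mu> A) (\<mu> B)"
    by (rule valuation_cover_estimate[OF assms(2) _ assms(7)])
  then show ?thesis
    unfolding Delta_open_def Delta_closed_def P_def N_def A_def B_def .
qed

end
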